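(* Let $R$ be a field, $S$ an idempotent semifield and $v:R\to S$ a B\'ezout valuation. Then $v$ is surjective if and only if its restriction $v^\circ:R^\circ\to S^\circ$ is surjective.
   Context: An idempotent semiring is commutative with $a+a=a$, ordered by $a\le b$ iff $a+b=b$; a semifield has nonzero elements invertible. A valuation $v:R\to S$ satisfies $v(0)=0$, $v(1)=v(-1)=1$, $v(ab)=v(a)v(b)$, $v(a+b)\le v(a)+v(b)$, $v(a)\ne0$ for $a\ne0$. $R^\circ=\{a\in R:v(a)\le1\}$, $S^\circ=\{x\in S:x\le1\}$. $v$ is B\'ezout if for all $a,b\in R$ there are $x,y\in R^\circ$ with $v(xa+yb)=v(a)+v(b)$. *)

theory Defs
  imports Main
begin

definition idem_semifield :: "'b::comm_semiring_1 itself \<Rightarrow> bool" where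
  "idem_semifield _ \<longleftrightarrow> (\<forall>a::'b. a + a = a) \<and> (\<forall>x::'b. x \<noteq> 0 \<longrightarrow> (\<exists>y. x * y = 1))"

text \<open>The natural order of an idempotent semiring: a \<le> b iff a + b = b.\<close>
definition sle :: "'b::comm_semiring_1 \<Rightarrow> 'b \<Rightarrow> bool" where
  "sle a b \<longleftrightarrow> a + b = b"

definition valuation :: "('a::field \<Rightarrow> 'b::comm_semiring_1) \<Rightarrow> bool" where
  "valuation v \<longleftrightarrow> v 0 = 0 \<and> v 1 = 1 \<and> v (-1) = 1
     \<and> (\<forall>a b. v (a * b) = v a * v b)
     \<and> (\<forall>a b. sle (v (a + b)) (v a + v b))
     \<and> (\<forall>a. a \<noteq> 0 \<longrightarrow> v a \<noteq> 0)"

definition val_ring :: "('a::field \<Rightarrow> 'b::comm_semiring_1) \<Rightarrow> 'a set" where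
  "val_ring v = {a. sle (v a) 1}"

definition unit_part :: "'b::comm_semiring_1 set" where
  "unit_part = {x. sle x 1}"

definition bezout :: "('a::field \<Rightarrow> 'b::comm_semiring_1) \<Rightarrow> bool" where
  "bezout v \<longleftrightarrow> (\<forall>a b. \<exists>x\<in>val_ring v. \<exists>y\<in>val_ring v. v (x * a + y * b) = v a + v b)"

end

theory Submission
  imports Defs
begin

text \<open>Every element s of an idempotent semifield is a quotient of two elements of
  \<open>S\<degree>\<close>: for \<open>u = (s + 1)\<inverse>\<close>, the inequalities \<open>1 \<le> s + 1\<close> and \<open>s \<le> s + 1\<close> give
  \<open>u \<le> 1\<close> and \<open>s u \<le> 1\<close>, and \<open>s = s u / u\<close>. So if \<open>v\<close> hits all of \<open>S\<degree>\<close>, choosing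
  \<open>v a = u\<close> and \<open>v b = s u\<close> gives \<open>v (b / a) = s\<close>.\<close>

lemma idem_semifield_add_idem:
  "idem_semifield TYPE('b::comm_semiring_1) \<Longrightarrow> (a::'b) + a = a"
  unfolding idem_semifield_def by blast

lemma idem_semifield_right_inverse:
  "idem_semifield TYPE('b::comm_semiring_1) \<Longrightarrow> (x::'b) \<noteq> 0 \<Longrightarrow> \<exists>y. x * y = 1"
  unfolding idem_semifield_def by blast

lemma sle_mult_left: "sle a b \<Longrightarrow> sle (c * a) (c * b)"
  unfolding sle_def by (metis distrib_left)

lemma sle_add_left:
  assumes "idem_semifield TYPE('b::comm_semiring_1)"
  shows "sle (a::'b) (a + b)"
  unfolding sle_def using idem_semifield_add_idem[OF assms, of a]
  by (metis add.assoc)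

lemma sle_add_right:
  assumes "idem_semifield TYPE('b::comm_semiring_1)"
  shows "sle (b::'b) (a + b)"
  using sle_add_left[OF assms, of b a] by (simp add: add.commute)

lemma idem_semifield_add_one_neq_zero:
  assumes "idem_semifield TYPE('b::comm_semiring_1)"
  shows "(s::'b) + 1 \<noteq> 0"
proof
  assume "s + 1 = 0"
  with sle_add_right[OF assms, of 1 s] show False
    unfolding sle_def by simp
qed

lemma idem_semifield_quotient_of_unit_part:
  fixes s :: "'b::comm_semiring_1"
  assumes "idem_semifield TYPE('b)"
  obtains u where "u \<in> unit_part" "s * u \<in> unit_part" "(s + 1) * u = 1"
proof -
  obtain u where u: "(s + 1) * u = 1"
    using idem_semifield_right_inverse[OF assms idem_semifield_add_one_neq_zero[OF assms]]
    by blast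
  have "sle (u * 1) (u * (s + 1))" "sle (u * s) (u * (s + 1))"
    using sle_mult_left sle_add_right[OF assms] sle_add_left[OF assms] by blast+
  then have "u \<in> unit_part" "s * u \<in> unit_part"
    using u unfolding unit_part_def by (simp_all add: mult.commute)
  with u show thesis using that by blast
qed

lemma valuation_inverse:
  assumes "valuation v" and "a \<noteq> 0"
  shows "v (inverse a) * v a = 1"
proof -
  have "v (inverse a) * v a = v (inverse a * a)"
    using assms(1) unfolding valuation_def by simp
  also have "\<dots> = 1"
    using assms unfolding valuation_def by simp
  finally show ?thesis .
qed

lemma image_val_ring: "v ` val_ring v = unit_part \<inter> range v"
  unfolding val_ring_def unit_part_def by auto

lemma surj_if_unit_part_subset_range:
  fixes v :: "'a::field \<Rightarrow> 'b::comm_semiring_1"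
  assumes idem: "idem_semifield TYPE('b)"
    and val: "valuation v"
    and covered: "unit_part \<subseteq> range v"
  shows "surj v"
proof -
  have "s \<in> range v" for s
  proof -
    obtain u where "u \<in> unit_part" "s * u \<in> unit_part" and u: "(s + 1) * u = 1"
      using idem_semifield_quotient_of_unit_part[OF idem] by blast
    with covered obtain a b where a: "v a = u" and b: "v b = s * u"
      by (metis rangeE subsetD)
    have "a \<noteq> 0"
      using a u val unfolding valuation_def by auto
    from valuation_inverse[OF val this] a have inv_a: "v (inverse a) * u = 1"
      by simp
    have "v (inverse a) = v (inverse a) * ((s + 1) * u)"
      using u by simp
    also have "\<dots> = s + 1"
      using inv_a by (metis mult.assoc mult.commute mult_1_left)
    finally have "v (inverse a) = s + 1" .
    with val b have "v (b * inverse a) = s * ((s + 1) * u)"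
      unfolding valuation_def by (simp add: ac_simps)
    then show ?thesis
      using u by (metis mult_1_right rangeI)
  qed
  then show ?thesis by blast
qed

theorem corollary2p16:
  fixes v :: "'a::field \<Rightarrow> 'b::comm_semiring_1"
  assumes "idem_semifield TYPE('b)"
    and "valuation v"
    and "bezout v"
  shows "surj v \<longleftrightarrow> v ` val_ring v = unit_part"
proof -
  have "v ` val_ring v = unit_part \<longleftrightarrow> unit_part \<subseteq> range v"
    unfolding image_val_ring by blast
  then show ?thesis
    using surj_if_unit_part_subset_range[OF assms(1,2)] by auto
qed

end
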